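(* Let $(X,d)$ be a metric space, $k>0$, and let $\mathcal S$ be a semigroup acting on $X$ such that $\mathcal S s\subseteq s\mathcal S$ for every $s\in\mathcal S$. If the action $(\mathcal S,X)$ is orbit $k$-Lipschitzian, then it is strong-orbit $k$-Lipschitzian. In particular, this holds whenever $\mathcal S$ is a group or a commutative semigroup.
   Context: A semigroup action $(\mathcal S,X)$ is a map $\mathcal S\times X\to X$, $(s,x)\mapsto sx$, with $(st)x=s(tx)$. For $x\in X$ and nonempty $C\subseteq X$, $D(x,C)=\sup\{d(x,y):y\in C\}$; the orbit of $x$ is $o(x)=\{x\}\cup\{sx:s\in\mathcal S\}$. The action is orbit $k$-Lipschitzian if $d(sx,sy)\le k\,D(x,o(y))$ for all $x,y\in X$, $s\in\mathcal S$; it is strong-orbit $k$-Lipschitzian if $D(sx,o(sy))\le k\,D(x,o(y))$ for all $s\in\mathcal S$, $x,y\in X$. *)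

theory Defs
  imports "HOL-Analysis.Analysis"
begin

definition semigroup_action :: "('s::semigroup_mult \<Rightarrow> 'x \<Rightarrow> 'x) \<Rightarrow> bool" where
  "semigroup_action act \<longleftrightarrow> (\<forall>s t x. act (s * t) x = act s (act t x))"

definition Dsup :: "'x::metric_space \<Rightarrow> 'x set \<Rightarrow> ereal" where
  "Dsup x C = (SUP y\<in>C. ereal (dist x y))"

definition orbit :: "('s \<Rightarrow> 'x \<Rightarrow> 'x) \<Rightarrow> 'x \<Rightarrow> 'x set" where
  "orbit act x = insert x (range (\<lambda>s. act s x))"

definition orbit_lipschitzian :: "('s \<Rightarrow> 'x::metric_space \<Rightarrow> 'x) \<Rightarrow> real \<Rightarrow> bool" where
  "orbit_lipschitzian act k \<longleftrightarrow>
     (\<forall>s x y. ereal (dist (act s x) (act s y)) \<le> ereal k * Dsup x (orbit act y))"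

definition strong_orbit_lipschitzian :: "('s \<Rightarrow> 'x::metric_space \<Rightarrow> 'x) \<Rightarrow> real \<Rightarrow> bool" where
  "strong_orbit_lipschitzian act k \<longleftrightarrow>
     (\<forall>s x y. Dsup (act s x) (orbit act (act s y)) \<le> ereal k * Dsup x (orbit act y))"

end

theory Submission
  imports Defs
begin

text \<open>Every point of o(sy) has the form sw with w in o(y), since ts = su gives t(sy) = s(uy).
  So D(sx, o(sy)) is bounded by the supremum of d(sx, sw) over w in o(y); each such distance is
  at most k D(x, o(w)) by the orbit Lipschitz condition, and D(x, o(w)) \<le> D(x, o(y)) because
  o(w) \<subseteq> o(y).\<close>

lemma Dsup_mono: "A \<subseteq> B \<Longrightarrow> Dsup x A \<le> Dsup x B"
  unfolding Dsup_def by (rule SUP_subset_mono) simp_all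

lemma orbit_subset_orbit:
  assumes "semigroup_action act" and "w \<in> orbit act y"
  shows "orbit act w \<subseteq> orbit act y"
  using assms unfolding orbit_def semigroup_action_def by (auto, metis rangeI)

lemma orbit_act_subset_image_orbit:
  assumes "semigroup_action act" and "\<forall>t. \<exists>u. t * s = s * u"
  shows "orbit act (act s y) \<subseteq> act s ` orbit act y"
proof
  fix z assume "z \<in> orbit act (act s y)"
  then consider "z = act s y" | t where "z = act t (act s y)"
    unfolding orbit_def by auto
  then show "z \<in> act s ` orbit act y"
  proof cases
    case 1
    then show ?thesis unfolding orbit_def by blast
  next
    case 2
    obtain u where "t * s = s * u" using assms(2) by blast
    then have "z = act s (act u y)"
      using 2 assms(1) unfolding semigroup_action_def by metis
    then show ?thesis unfolding orbit_def by blast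
  qed
qed

theorem lemma3p10:
  fixes act :: "'s::semigroup_mult \<Rightarrow> 'x::metric_space \<Rightarrow> 'x" and k :: real
  assumes "k > 0"
    and "semigroup_action act"
    and "\<forall>s t :: 's. \<exists>u. t * s = s * u"
    and "orbit_lipschitzian act k"
  shows "strong_orbit_lipschitzian act k"
  unfolding strong_orbit_lipschitzian_def
proof (intro allI)
  fix s x y
  have "ereal (dist (act s x) (act s w)) \<le> ereal k * Dsup x (orbit act y)"
    if "w \<in> orbit act y" for w
  proof -
    have "ereal (dist (act s x) (act s w)) \<le> ereal k * Dsup x (orbit act w)"
      using assms(4) unfolding orbit_lipschitzian_def by blast
    also have "\<dots> \<le> ereal k * Dsup x (orbit act y)"
      using assms(1) Dsup_mono[OF orbit_subset_orbit[OF assms(2) that]]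
      by (simp add: ereal_mult_left_mono)
    finally show ?thesis .
  qed
  then have "Dsup (act s x) (act s ` orbit act y) \<le> ereal k * Dsup x (orbit act y)"
    unfolding Dsup_def by (auto intro: SUP_least)
  then show "Dsup (act s x) (orbit act (act s y)) \<le> ereal k * Dsup x (orbit act y)"
    using Dsup_mono[OF orbit_act_subset_image_orbit[OF assms(2)]] assms(3) order_trans
    by blast
qed

end
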